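(* Let $H=\{\cdot\mid 1\}$ and let $\mathcal{U}=\mathcal{D}(H)$. Then $H\equiv_\mathcal{U}0$.
   Context: Games are finite partizan games; $1=\{0\mid\cdot\}$, and $\{\cdot\mid 1\}$ is the game with no Left option and sole Right option $1$. $o(G)$ is the misère outcome class (ordered $\mathscr{L}>\mathscr{N}>\mathscr{R}$, $\mathscr{L}>\mathscr{P}>\mathscr{R}$). A universe is a set of games closed under options, disjunctive sums, conjugates, and forming $\{\mathscr{G}^L\mid\mathscr{G}^R\}$ from nonempty finite subsets of it; $\mathcal{D}(\mathcal{A})$ is the smallest universe containing $\mathcal{A}$. $G\equiv_\mathcal{U}H$ means $o(G+X)=o(H+X)$ for all $X\in\mathcal{U}$. *)

theory Defs
  imports Main "HOL-Library.FSet"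
begin

datatype game = Game (lopts: "game fset") (ropts: "game fset")

definition zero :: game where "zero = Game {||} {||}"
definition one :: game where "one = Game {|zero|} {||}"

primrec conj :: "game \<Rightarrow> game" where
  "conj (Game L R) = Game (fimage conj R) (fimage conj L)"

lemma size_lopt: "x |\<in>| L \<Longrightarrow> size x < size (Game L R)"
  by (induction L) (auto simp: size_fset_simps)

lemma size_ropt: "x |\<in>| R \<Longrightarrow> size x < size (Game L R)"
  by (induction R) (auto simp: size_fset_simps)

function gsum :: "game \<Rightarrow> game \<Rightarrow> game" where
  "gsum (Game GL GR) (Game HL HR) =
     Game ((\<lambda>x. gsum x (Game HL HR)) |`| GL |\<union>| (\<lambda>y. gsum (Game GL GR) y) |`| HL)
          ((\<lambda>x. gsum x (Game HL HR)) |`| GR |\<union>| (\<lambda>y. gsum (Game GL GR) y) |`| HR)"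
  by pat_completeness auto
termination
  by (relation "measure (\<lambda>(g, h). size g + size h)")
     (auto dest: size_lopt size_ropt)

text \<open>Misere play: a player with no move available wins.
  \<open>first_wins G = (l, r)\<close>: l says Left wins G moving first, r says Right wins G moving first.\<close>
primrec first_wins :: "game \<Rightarrow> bool \<times> bool" where
  "first_wins (Game L R) =
     (L = {||} \<or> (\<exists>p \<in> fset (fimage first_wins L). \<not> snd p),
      R = {||} \<or> (\<exists>p \<in> fset (fimage first_wins R). \<not> fst p))"

datatype outcome = OutL | OutN | OutP | OutR

definition misere_outcome :: "game \<Rightarrow> outcome" where
  "misere_outcome G =
     (case first_wins G of
        (True, False) \<Rightarrow> OutL
      | (True, True) \<Rightarrow> OutN
      | (False, False) \<Rightarrow> OutP
      | (False, True) \<Rightarrow> OutR)"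

definition universe :: "game set \<Rightarrow> bool" where
  "universe U \<longleftrightarrow>
     (\<forall>G \<in> U. fset (lopts G) \<subseteq> U \<and> fset (ropts G) \<subseteq> U) \<and>
     (\<forall>G \<in> U. \<forall>H \<in> U. gsum G H \<in> U) \<and>
     (\<forall>G \<in> U. conj G \<in> U) \<and>
     (\<forall>A B. A \<noteq> {||} \<longrightarrow> B \<noteq> {||} \<longrightarrow> fset A \<subseteq> U \<longrightarrow> fset B \<subseteq> U \<longrightarrow> Game A B \<in> U)"

definition univ_closure :: "game set \<Rightarrow> game set" where
  "univ_closure A = \<Inter> {U. universe U \<and> A \<subseteq> U}"

definition equiv_mod :: "game set \<Rightarrow> game \<Rightarrow> game \<Rightarrow> bool" where
  "equiv_mod U G H \<longleftrightarrow> (\<forall>X \<in> U. misere_outcome (gsum G X) = misere_outcome (gsum H X))"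

end

theory Submission
  imports Defs
begin

text \<open>In \<open>H + X\<close> Left has no move in \<open>H\<close>, while Right gains the extra move to \<open>1 + X\<close>.
  If Left, moving first, loses \<open>1 + X\<close>, then in particular Right wins \<open>X\<close> moving first
  (Left may play \<open>1 \<rightarrow> 0\<close>), so the extra move never creates a win for Right; and it is
  the only move Right has when \<open>X\<close> is a Right end. Hence, by induction on \<open>X\<close>, \<open>H + X\<close>
  and \<open>X\<close> have the same outcome provided every Right end \<open>E\<close> among the subpositions of
  \<open>X\<close> is strong: Right can answer each Left move in \<open>E\<close> by returning to a strong Right end,
  which makes Left lose \<open>1 + E\<close>. The games all of whose Right ends and (mirrored) Left
  ends are strong form a universe containing \<open>H\<close>, so they include all of \<open>\<D>(H)\<close>.\<close>
lemma lopts_gsum: "lopts (gsum G K) = (\<lambda>x. gsum x K) |`| lopts G |\<union>| gsum G |`| lopts K"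
  by (cases G; cases K) simp

lemma ropts_gsum: "ropts (gsum G K) = (\<lambda>x. gsum x K) |`| ropts G |\<union>| gsum G |`| ropts K"
  by (cases G; cases K) simp

lemma lopts_conj: "lopts (conj G) = conj |`| ropts G"
  by (cases G) simp

lemma ropts_conj: "ropts (conj G) = conj |`| lopts G"
  by (cases G) simp

lemma first_wins_eq:
  "first_wins G =
     (lopts G = {||} \<or> (\<exists>x. x |\<in>| lopts G \<and> \<not> snd (first_wins x)),
      ropts G = {||} \<or> (\<exists>x. x |\<in>| ropts G \<and> \<not> fst (first_wins x)))"
  by (cases G) auto

lemma size_lopts_less: "x |\<in>| lopts G \<Longrightarrow> size x < size G"
  by (cases G) (auto dest: size_lopt)

lemma size_ropts_less: "x |\<in>| ropts G \<Longrightarrow> size x < size G"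
  by (cases G) (auto dest: size_ropt)

lemma gsum_zero_left: "gsum zero X = X"
  by (induction X) (auto simp: zero_def intro!: fset.map_ident_strong)

lemma gsum_commute: "gsum G K = gsum K G"
proof (induction G K rule: gsum.induct)
  case (1 GL GR HL HR)
  then show ?case by (auto intro!: fset.map_cong0 simp: funion_commute)
qed

lemma conj_conj: "conj (conj G) = G"
  by (induction G) (auto intro!: fset.map_ident_strong)

lemma conj_gsum: "conj (gsum G K) = gsum (conj G) (conj K)"
proof (induction G K rule: gsum.induct)
  case (1 GL GR HL HR)
  then show ?case by (simp add: fimage_funion comp_def cong: fset.map_cong)
qed

lemma options_zero: "lopts zero = {||}" "ropts zero = {||}"
  by (simp_all add: zero_def)

lemma options_one: "lopts one = {|zero|}" "ropts one = {||}"
  by (simp_all add: one_def)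

lemma conj_zero: "conj zero = zero"
  by (simp add: zero_def)

lemma lopts_gsum_one: "lopts (gsum one G) = finsert G (gsum one |`| lopts G)"
  by (simp add: lopts_gsum options_one gsum_zero_left)

lemma ropts_gsum_one: "ropts (gsum one G) = gsum one |`| ropts G"
  by (simp add: ropts_gsum options_one)

lemma options_gsum_H:
  "lopts (gsum (Game {||} {|one|}) G) = gsum (Game {||} {|one|}) |`| lopts G"
  "ropts (gsum (Game {||} {|one|}) G) =
     finsert (gsum one G) (gsum (Game {||} {|one|}) |`| ropts G)"
  by (simp_all add: lopts_gsum ropts_gsum)

inductive strong_right_end :: "game \<Rightarrow> bool" where
  "ropts X = {||} \<Longrightarrow>
   (\<And>Y. Y |\<in>| lopts X \<Longrightarrow> ropts Y = {||} \<or> (\<exists>Z. Z |\<in>| ropts Y \<and> strong_right_end Z)) \<Longrightarrow>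
   strong_right_end X"

lemma strong_right_end_gsum:
  "strong_right_end G \<Longrightarrow> strong_right_end K \<Longrightarrow> strong_right_end (gsum G K)"
proof (induction "size G + size K" arbitrary: G K rule: less_induct)
  case less
  have right_reply: "ropts (gsum Y Q) = {||} \<or> (\<exists>Z. Z |\<in>| ropts (gsum Y Q) \<and> strong_right_end Z)"
    if P: "strong_right_end P" and Q: "strong_right_end Q"
      and size: "size P + size Q = size G + size K" and Y: "Y |\<in>| lopts P" for P Q Y
  proof (cases "ropts Y = {||}")
    case True
    with Q show ?thesis by (auto simp: ropts_gsum elim: strong_right_end.cases)
  next
    case False
    with P Y obtain Z where Z: "Z |\<in>| ropts Y" "strong_right_end Z"
      by (auto elim: strong_right_end.cases)
    from Z(1) Y have "size Z < size P"
      using size_lopts_less size_ropts_less less_trans by blast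
    with less size Z Q have "strong_right_end (gsum Z Q)" by auto
    with Z(1) show ?thesis by (auto simp: ropts_gsum)
  qed
  show ?case
  proof (rule strong_right_end.intros)
    show "ropts (gsum G K) = {||}"
      using less.prems by (auto simp: ropts_gsum elim: strong_right_end.cases)
  next
    fix Y assume "Y |\<in>| lopts (gsum G K)"
    moreover have "lopts (gsum G K) = (\<lambda>Y. gsum Y K) |`| lopts G |\<union>| (\<lambda>Y. gsum Y G) |`| lopts K"
      unfolding lopts_gsum by (subst (2) gsum_commute) (simp add: funion_commute)
    ultimately show "ropts Y = {||} \<or> (\<exists>Z. Z |\<in>| ropts Y \<and> strong_right_end Z)"
      using right_reply[of G K] right_reply[of K G] less.prems by auto
  qed
qed

inductive hereditarily_strong_ends :: "game \<Rightarrow> bool" where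
  "(ropts X = {||} \<Longrightarrow> strong_right_end X) \<Longrightarrow>
   (lopts X = {||} \<Longrightarrow> strong_right_end (conj X)) \<Longrightarrow>
   (\<And>Y. Y |\<in>| lopts X \<Longrightarrow> hereditarily_strong_ends Y) \<Longrightarrow>
   (\<And>Y. Y |\<in>| ropts X \<Longrightarrow> hereditarily_strong_ends Y) \<Longrightarrow>
   hereditarily_strong_ends X"

lemma hereditarily_strong_ends_gsum:
  "hereditarily_strong_ends G \<Longrightarrow> hereditarily_strong_ends K \<Longrightarrow>
   hereditarily_strong_ends (gsum G K)"
proof (induction "size G + size K" arbitrary: G K rule: less_induct)
  case less
  from less.prems have G: "(ropts G = {||} \<longrightarrow> strong_right_end G) \<and>
      (lopts G = {||} \<longrightarrow> strong_right_end (conj G)) \<and>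
      (\<forall>Y. Y |\<in>| lopts G \<or> Y |\<in>| ropts G \<longrightarrow> hereditarily_strong_ends Y)"
    and K: "(ropts K = {||} \<longrightarrow> strong_right_end K) \<and>
      (lopts K = {||} \<longrightarrow> strong_right_end (conj K)) \<and>
      (\<forall>Y. Y |\<in>| lopts K \<or> Y |\<in>| ropts K \<longrightarrow> hereditarily_strong_ends Y)"
    by (auto elim: hereditarily_strong_ends.cases)
  have move_G: "hereditarily_strong_ends (gsum B K)" if "B |\<in>| lopts G \<or> B |\<in>| ropts G" for B
    using that G less.prems(2) less.hyps[of B K] by (auto dest: size_lopts_less size_ropts_less)
  have move_K: "hereditarily_strong_ends (gsum G B)" if "B |\<in>| lopts K \<or> B |\<in>| ropts K" for B
    using that K less.prems(1) less.hyps[of G B] by (auto dest: size_lopts_less size_ropts_less)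
  show ?case
  proof (rule hereditarily_strong_ends.intros)
    show "strong_right_end (gsum G K)" if "ropts (gsum G K) = {||}"
      using that G K by (simp add: ropts_gsum strong_right_end_gsum)
    show "strong_right_end (conj (gsum G K))" if "lopts (gsum G K) = {||}"
      using that G K by (simp add: lopts_gsum conj_gsum strong_right_end_gsum)
    show "hereditarily_strong_ends Y" if "Y |\<in>| lopts (gsum G K)" for Y
      using that move_G move_K by (auto simp: lopts_gsum)
    show "hereditarily_strong_ends Y" if "Y |\<in>| ropts (gsum G K)" for Y
      using that move_G move_K by (auto simp: ropts_gsum)
  qed
qed

lemma hereditarily_strong_ends_conj:
  "hereditarily_strong_ends G \<Longrightarrow> hereditarily_strong_ends (conj G)"
proof (induction rule: hereditarily_strong_ends.induct)
  case (1 X)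
  show ?case
    by (rule hereditarily_strong_ends.intros)
       (use 1 in \<open>auto simp: lopts_conj ropts_conj conj_conj\<close>)
qed

lemma universe_hereditarily_strong_ends: "universe {G. hereditarily_strong_ends G}"
  unfolding universe_def
proof (intro conjI ballI allI impI)
  fix A B :: "game fset"
  assume "A \<noteq> {||}" "B \<noteq> {||}" "fset A \<subseteq> {G. hereditarily_strong_ends G}"
    "fset B \<subseteq> {G. hereditarily_strong_ends G}"
  then show "Game A B \<in> {G. hereditarily_strong_ends G}"
    by (auto intro!: hereditarily_strong_ends.intros[of "Game A B"])
qed (auto simp: hereditarily_strong_ends_gsum hereditarily_strong_ends_conj
          elim: hereditarily_strong_ends.cases)

lemma strong_right_end_zero: "strong_right_end zero"
  by (rule strong_right_end.intros) (simp_all add: options_zero)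

lemma hereditarily_strong_ends_zero: "hereditarily_strong_ends zero"
  by (rule hereditarily_strong_ends.intros)
     (simp_all add: options_zero conj_zero strong_right_end_zero)

lemma hereditarily_strong_ends_one: "hereditarily_strong_ends one"
proof (rule hereditarily_strong_ends.intros)
  show "strong_right_end one"
    by (rule strong_right_end.intros) (simp_all add: options_zero options_one)
qed (simp_all add: options_one hereditarily_strong_ends_zero)

lemma hereditarily_strong_ends_H: "hereditarily_strong_ends (Game {||} {|one|})"
proof (rule hereditarily_strong_ends.intros)
  show "strong_right_end (conj (Game {||} {|one|}))"
    by (rule strong_right_end.intros)
       (auto simp: lopts_conj ropts_conj options_one conj_zero strong_right_end_zero)
qed (simp_all add: hereditarily_strong_ends_one)

lemma univ_closure_H_hereditarily_strong_ends:
  "G \<in> univ_closure {Game {||} {|one|}} \<Longrightarrow> hereditarily_strong_ends G"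
  using universe_hereditarily_strong_ends hereditarily_strong_ends_H
  unfolding univ_closure_def by blast

lemma snd_first_wins_if_not_fst_first_wins_gsum_one:
  "\<not> fst (first_wins (gsum one G)) \<Longrightarrow> snd (first_wins G)"
  by (subst (asm) first_wins_eq) (auto simp: lopts_gsum_one)

lemma not_fst_first_wins_gsum_one_if_strong_right_end:
  "strong_right_end G \<Longrightarrow> \<not> fst (first_wins (gsum one G))"
proof (induction rule: strong_right_end.induct)
  case (1 X)
  have "snd (first_wins (gsum one Y))" if Y: "Y |\<in>| lopts X" for Y
  proof (cases "ropts Y = {||}")
    case True
    then show ?thesis by (subst first_wins_eq) (simp add: ropts_gsum_one)
  next
    case False
    with 1 Y obtain Z where "Z |\<in>| ropts Y" "\<not> fst (first_wins (gsum one Z))" by blast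
    then show ?thesis by (subst first_wins_eq) (auto simp: ropts_gsum_one)
  qed
  moreover have "snd (first_wins X)"
    using 1 by (subst first_wins_eq) simp
  ultimately show ?case
    by (subst first_wins_eq) (auto simp: lopts_gsum_one)
qed

lemma first_wins_gsum_H:
  "hereditarily_strong_ends G \<Longrightarrow> first_wins (gsum (Game {||} {|one|}) G) = first_wins G"
proof (induction rule: hereditarily_strong_ends.induct)
  case (1 X)
  let ?H = "Game {||} {|one|}"
  have IH_L: "first_wins (gsum ?H Y) = first_wins Y" if "Y |\<in>| lopts X" for Y
    using 1 that by blast
  have IH_R: "first_wins (gsum ?H Y) = first_wins Y" if "Y |\<in>| ropts X" for Y
    using 1 that by blast
  have fst: "fst (first_wins (gsum ?H X)) = fst (first_wins X)"
    using IH_L by (subst (1 2) first_wins_eq) (auto simp: options_gsum_H)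
  have "snd (first_wins (gsum ?H X)) \<longleftrightarrow>
      \<not> fst (first_wins (gsum one X)) \<or> (\<exists>Y. Y |\<in>| ropts X \<and> \<not> fst (first_wins Y))"
    using IH_R by (subst first_wins_eq) (auto simp: options_gsum_H)
  moreover have "snd (first_wins X) \<longleftrightarrow>
      ropts X = {||} \<or> (\<exists>Y. Y |\<in>| ropts X \<and> \<not> fst (first_wins Y))"
    by (subst first_wins_eq) simp
  ultimately have "snd (first_wins (gsum ?H X)) = snd (first_wins X)"
    using 1(1) not_fst_first_wins_gsum_one_if_strong_right_end
      snd_first_wins_if_not_fst_first_wins_gsum_one
    by blast
  with fst show ?case
    by (simp add: prod_eq_iff)
qed

theorem mainTheorem18:
  shows "equiv_mod (univ_closure {Game {||} {|one|}}) (Game {||} {|one|}) zero"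
  unfolding equiv_mod_def
  by (simp add: gsum_zero_left first_wins_gsum_H univ_closure_H_hereditarily_strong_ends
      misere_outcome_def)

end
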